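(* Let $\Pi$ be a non-negative projector on $\mathcal{Q}^n$ and suppose $\Pi|\psi\rangle=|\psi\rangle$ for some non-negative state $|\psi\rangle$. Then for any $x\in\mathcal{S}(\psi)$: (1) $\langle x|\Pi|x\rangle>0$; (2) if $\langle x|\Pi|y\rangle>0$ for some $y\in\{0,1\}^n$, then $y\in\mathcal{S}(\psi)$ and $$\frac{\langle y|\psi\rangle}{\langle x|\psi\rangle}=\sqrt{\frac{\langle y|\Pi|y\rangle}{\langle x|\Pi|x\rangle}}.$$
   Context: $\mathcal{Q}^n=(\mathbb{C}^2)^{\otimes n}$ with standard basis $\{|x\rangle\}$, $x\in\{0,1\}^n$. A non-negative projector is a Hermitian projector whose standard-basis matrix has real non-negative entries. A non-negative state is a normalized vector with real non-negative amplitudes in the standard basis. For such a state, its support is $\mathcal{S}(\psi)=\{x\in\{0,1\}^n:\langle x|\psi\rangle>0\}$. *)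

theory Defs
  imports "HOL-Analysis.Analysis"
begin

text \<open>Standard basis of Q^n: bit strings of length n, as bool lists.\<close>
definition bitstrings :: "nat \<Rightarrow> bool list set" where
  "bitstrings n = {x. length x = n}"

text \<open>Operators are given by their standard-basis matrix entries M x y = <x|M|y>.
  A non-negative projector: entries real and non-negative, Hermitian (for real
  entries: symmetric), and idempotent.\<close>
definition nonneg_projector :: "nat \<Rightarrow> (bool list \<Rightarrow> bool list \<Rightarrow> real) \<Rightarrow> bool" where
  "nonneg_projector n P \<longleftrightarrow>
     (\<forall>x\<in>bitstrings n. \<forall>y\<in>bitstrings n. P x y \<ge> 0) \<and>
     (\<forall>x\<in>bitstrings n. \<forall>y\<in>bitstrings n. P x y = P y x) \<and>
     (\<forall>x\<in>bitstrings n. \<forall>y\<in>bitstrings n. (\<Sum>z\<in>bitstrings n. P x z * P z y) = P x y)"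

definition nonneg_state :: "nat \<Rightarrow> (bool list \<Rightarrow> real) \<Rightarrow> bool" where
  "nonneg_state n \<psi> \<longleftrightarrow>
     (\<forall>x\<in>bitstrings n. \<psi> x \<ge> 0) \<and> (\<Sum>x\<in>bitstrings n. (\<psi> x)\<^sup>2) = 1"

definition apply_op :: "nat \<Rightarrow> (bool list \<Rightarrow> bool list \<Rightarrow> real) \<Rightarrow> (bool list \<Rightarrow> real) \<Rightarrow> bool list \<Rightarrow> real" where
  "apply_op n P \<psi> x = (\<Sum>y\<in>bitstrings n. P x y * \<psi> y)"

definition support :: "nat \<Rightarrow> (bool list \<Rightarrow> real) \<Rightarrow> bool list set" where
  "support n \<psi> = {x\<in>bitstrings n. \<psi> x > 0}"

end

theory Submission
  imports Defs
begin

text \<open>On the support \<open>S\<close> of \<psi>, conjugating by \<psi> turns \<open>I - \<Pi>\<close> into a Dirichlet form: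
  \<open>2(\<langle>u,u\<rangle> - \<langle>u,\<Pi>u\<rangle>) = \<Sum>\<^sub>a\<^sub>b \<Pi>\<^sub>a\<^sub>b (u\<^sub>a\<psi>\<^sub>b - u\<^sub>b\<psi>\<^sub>a)\<^sup>2/(\<psi>\<^sub>a\<psi>\<^sub>b)\<close>. Every column
  \<open>u = \<Pi>|c\<rangle>\<close> with \<open>c \<in> S\<close> is fixed by \<open>\<Pi>\<close> and vanishes off \<open>S\<close>, so the form vanishes and,
  \<open>\<Pi>\<close> being non-negative, \<open>u/\<psi>\<close> is constant along every edge \<open>\<Pi>\<^sub>a\<^sub>b > 0\<close>. Taking \<open>c = x\<close> and
  \<open>c = y\<close> gives \<open>\<Pi>\<^sub>y\<^sub>x\<psi>\<^sub>x = \<Pi>\<^sub>x\<^sub>x\<psi>\<^sub>y\<close> and \<open>\<Pi>\<^sub>x\<^sub>y\<psi>\<^sub>y = \<Pi>\<^sub>y\<^sub>y\<psi>\<^sub>x\<close>, whose quotient is the claim.\<close>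

lemma finite_bitstrings: "finite (bitstrings n)"
  unfolding bitstrings_def using finite_lists_length_eq[of "UNIV :: bool set" n] by simp

lemma ground_state_quadratic_form:
  fixes P :: "'a \<Rightarrow> 'a \<Rightarrow> real"
  assumes "finite S"
    and pos: "\<forall>a\<in>S. \<psi> a > 0"
    and sym: "\<forall>a\<in>S. \<forall>b\<in>S. P a b = P b a"
    and fixed: "\<forall>a\<in>S. (\<Sum>b\<in>S. P a b * \<psi> b) = \<psi> a"
  shows "(\<Sum>a\<in>S. \<Sum>b\<in>S. P a b * (u a * \<psi> b - u b * \<psi> a)\<^sup>2 / (\<psi> a * \<psi> b))
         = 2 * ((\<Sum>a\<in>S. (u a)\<^sup>2) - (\<Sum>a\<in>S. \<Sum>b\<in>S. u a * P a b * u b))"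
proof -
  define D where "D a b = P a b * \<psi> b * ((u a)\<^sup>2 / \<psi> a)" for a b
  have expand: "P a b * (u a * \<psi> b - u b * \<psi> a)\<^sup>2 / (\<psi> a * \<psi> b)
                = D a b + D b a - 2 * (u a * P a b * u b)" if "a \<in> S" "b \<in> S" for a b
  proof -
    have "\<psi> a > 0" "\<psi> b > 0" "P b a = P a b"
      using that pos sym by auto
    then show ?thesis
      by (simp add: D_def field_simps power2_eq_square)
  qed
  have diag: "(\<Sum>a\<in>S. \<Sum>b\<in>S. D a b) = (\<Sum>a\<in>S. (u a)\<^sup>2)"
  proof -
    have "(\<Sum>a\<in>S. \<Sum>b\<in>S. D a b) = (\<Sum>a\<in>S. (\<Sum>b\<in>S. P a b * \<psi> b) * ((u a)\<^sup>2 / \<psi> a))"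
      unfolding D_def by (simp only: sum_distrib_right)
    also have "\<dots> = (\<Sum>a\<in>S. (u a)\<^sup>2)"
      using fixed pos by (intro sum.cong) auto
    finally show ?thesis .
  qed
  have "(\<Sum>a\<in>S. \<Sum>b\<in>S. P a b * (u a * \<psi> b - u b * \<psi> a)\<^sup>2 / (\<psi> a * \<psi> b))
        = (\<Sum>a\<in>S. \<Sum>b\<in>S. D a b + D b a - 2 * (u a * P a b * u b))"
    using expand by (intro sum.cong) auto
  also have "\<dots> = (\<Sum>a\<in>S. \<Sum>b\<in>S. D a b) + (\<Sum>b\<in>S. \<Sum>a\<in>S. D a b)
                  - 2 * (\<Sum>a\<in>S. \<Sum>b\<in>S. u a * P a b * u b)"
    by (simp add: sum.distrib sum_subtractf sum_distrib_left sum.swap[of "\<lambda>a b. D b a"])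
  also have "\<dots> = 2 * ((\<Sum>a\<in>S. (u a)\<^sup>2) - (\<Sum>a\<in>S. \<Sum>b\<in>S. u a * P a b * u b))"
    using diag sum.swap[of D S S] by simp
  finally show ?thesis .
qed

lemma fixed_vector_ratio_constant_on_edges:
  fixes P :: "'a \<Rightarrow> 'a \<Rightarrow> real"
  assumes fin: "finite S"
    and pos: "\<forall>a\<in>S. \<psi> a > 0"
    and nonneg: "\<forall>a\<in>S. \<forall>b\<in>S. P a b \<ge> 0"
    and sym: "\<forall>a\<in>S. \<forall>b\<in>S. P a b = P b a"
    and fixed: "\<forall>a\<in>S. (\<Sum>b\<in>S. P a b * \<psi> b) = \<psi> a"
    and fixed_u: "\<forall>a\<in>S. (\<Sum>b\<in>S. P a b * u b) = u a"
    and "a \<in> S" "b \<in> S" "P a b > 0"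
  shows "u a * \<psi> b = u b * \<psi> a"
proof -
  define T where "T a b = P a b * (u a * \<psi> b - u b * \<psi> a)\<^sup>2 / (\<psi> a * \<psi> b)" for a b
  have T_nonneg: "T a b \<ge> 0" if "a \<in> S" "b \<in> S" for a b
    using that pos nonneg by (auto simp: T_def intro!: divide_nonneg_pos)
  have "(\<Sum>a\<in>S. \<Sum>b\<in>S. u a * P a b * u b) = (\<Sum>a\<in>S. u a * (\<Sum>b\<in>S. P a b * u b))"
    by (simp add: sum_distrib_left mult.assoc)
  also have "\<dots> = (\<Sum>a\<in>S. (u a)\<^sup>2)"
    using fixed_u by (intro sum.cong) (auto simp: power2_eq_square)
  finally have "(\<Sum>a\<in>S. \<Sum>b\<in>S. T a b) = 0"
    unfolding T_def using ground_state_quadratic_form[OF fin pos sym fixed] by simp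
  then have "(\<Sum>b\<in>S. T a b) = 0"
    using sum_nonneg_eq_0_iff[OF fin, of "\<lambda>a. \<Sum>b\<in>S. T a b"] T_nonneg \<open>a \<in> S\<close>
    by (simp add: sum_nonneg)
  then have "T a b = 0"
    using sum_nonneg_eq_0_iff[OF fin, of "T a"] T_nonneg \<open>a \<in> S\<close> \<open>b \<in> S\<close> by simp
  then show ?thesis
    using pos \<open>a \<in> S\<close> \<open>b \<in> S\<close> \<open>P a b > 0\<close> by (auto simp: T_def)
qed

locale nonneg_projector_fixed_vector =
  fixes B :: "'a set" and P :: "'a \<Rightarrow> 'a \<Rightarrow> real" and \<psi> :: "'a \<Rightarrow> real"
  assumes finite: "finite B"
    and nonneg: "\<And>a b. a \<in> B \<Longrightarrow> b \<in> B \<Longrightarrow> P a b \<ge> 0"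
    and sym: "\<And>a b. a \<in> B \<Longrightarrow> b \<in> B \<Longrightarrow> P a b = P b a"
    and idem: "\<And>a b. a \<in> B \<Longrightarrow> b \<in> B \<Longrightarrow> (\<Sum>c\<in>B. P a c * P c b) = P a b"
    and \<psi>_nonneg: "\<And>a. a \<in> B \<Longrightarrow> \<psi> a \<ge> 0"
    and fixed: "\<And>a. a \<in> B \<Longrightarrow> (\<Sum>b\<in>B. P a b * \<psi> b) = \<psi> a"
begin

definition supp :: "'a set" where
  "supp = {a \<in> B. \<psi> a > 0}"

lemma neighbour_in_supp:
  assumes "a \<in> supp" "b \<in> B" "P b a > 0"
  shows "b \<in> supp"
proof -
  have "P b a * \<psi> a \<le> (\<Sum>c\<in>B. P b c * \<psi> c)"
    using assms finite nonneg \<psi>_nonneg by (intro member_le_sum) (auto simp: supp_def)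
  also have "\<dots> = \<psi> b"
    using fixed \<open>b \<in> B\<close> by simp
  finally have "P b a * \<psi> a \<le> \<psi> b" .
  moreover have "P b a * \<psi> a > 0"
    using assms by (simp add: supp_def)
  ultimately show ?thesis
    using \<open>b \<in> B\<close> by (simp add: supp_def)
qed

lemma sum_supp_eq_sum:
  assumes "\<And>b. b \<in> B - supp \<Longrightarrow> f b = 0"
  shows "(\<Sum>b\<in>supp. f b) = (\<Sum>b\<in>B. f b)"
  using finite assms by (intro sum.mono_neutral_left) (auto simp: supp_def)

lemma fixed_on_supp: "a \<in> B \<Longrightarrow> (\<Sum>b\<in>supp. P a b * \<psi> b) = \<psi> a"
  using fixed \<psi>_nonneg by (subst sum_supp_eq_sum) (force simp: supp_def)+

lemma column_fixed_on_supp: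
  assumes "c \<in> supp" "a \<in> B"
  shows "(\<Sum>b\<in>supp. P a b * P b c) = P a c"
proof -
  have "P b c = 0" if "b \<in> B - supp" for b
    using that assms nonneg[of b c] neighbour_in_supp[of c b] by (force simp: supp_def)
  then show ?thesis
    using idem assms by (subst sum_supp_eq_sum) (auto simp: supp_def)
qed

lemma column_proportional_on_edge:
  assumes "c \<in> supp" "y \<in> B" "P y c > 0"
  shows "y \<in> supp" and "P y c * \<psi> c = P c c * \<psi> y"
proof -
  show y: "y \<in> supp"
    using neighbour_in_supp assms .
  have supp_B: "supp \<subseteq> B"
    by (auto simp: supp_def)
  show "P y c * \<psi> c = P c c * \<psi> y"
  proof (rule fixed_vector_ratio_constant_on_edges[where u = "\<lambda>a. P a c"])
    show "finite supp"
      using finite supp_B by (rule finite_subset[rotated])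
    show "\<forall>a\<in>supp. \<psi> a > 0"
      by (simp add: supp_def)
    show "\<forall>a\<in>supp. \<forall>b\<in>supp. P a b \<ge> 0" "\<forall>a\<in>supp. \<forall>b\<in>supp. P a b = P b a"
      using nonneg sym supp_B by blast+
    show "\<forall>a\<in>supp. (\<Sum>b\<in>supp. P a b * \<psi> b) = \<psi> a"
      "\<forall>a\<in>supp. (\<Sum>b\<in>supp. P a b * P b c) = P a c"
      using fixed_on_supp column_fixed_on_supp[OF \<open>c \<in> supp\<close>] supp_B by blast+
  qed (use assms y in auto)
qed

lemma diagonal_pos_on_supp:
  assumes "x \<in> supp"
  shows "P x x > 0"
proof (rule ccontr)
  assume "\<not> P x x > 0"
  have x: "x \<in> B" "\<psi> x > 0"
    using assms by (auto simp: supp_def)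
  then have "(\<Sum>z\<in>B. (P x z)\<^sup>2) = 0"
    using \<open>\<not> P x x > 0\<close> nonneg[of x x] idem[of x x] sym
    by (simp add: power2_eq_square)
  then have "\<forall>z\<in>B. P x z = 0"
    using sum_nonneg_eq_0_iff[OF finite, of "\<lambda>z. (P x z)\<^sup>2"] by simp
  then show False
    using fixed[of x] x by simp
qed

lemma amplitude_ratio:
  assumes "x \<in> supp" "y \<in> B" "P x y > 0"
  shows "y \<in> supp" and "\<psi> y / \<psi> x = sqrt (P y y / P x x)"
proof -
  have x: "x \<in> B" "\<psi> x > 0" "P x x > 0"
    using assms diagonal_pos_on_supp by (auto simp: supp_def)
  have "P y x > 0"
    using assms x sym by simp
  then show y: "y \<in> supp"
    using column_proportional_on_edge assms by blast
  have "P x y * \<psi> x = P x x * \<psi> y"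
    using column_proportional_on_edge(2)[OF \<open>x \<in> supp\<close> \<open>y \<in> B\<close> \<open>P y x > 0\<close>] sym x assms
    by simp
  moreover have "P x y * \<psi> y = P y y * \<psi> x"
    using column_proportional_on_edge(2)[OF y x(1) \<open>P x y > 0\<close>] .
  ultimately have "P x x * (\<psi> y)\<^sup>2 = P y y * (\<psi> x)\<^sup>2"
    by (metis mult.assoc mult.commute power2_eq_square)
  then have "(\<psi> y / \<psi> x)\<^sup>2 = P y y / P x x"
    using x by (simp add: field_simps power_divide)
  moreover have "\<psi> y / \<psi> x \<ge> 0"
    using x y by (simp add: supp_def)
  ultimately show "\<psi> y / \<psi> x = sqrt (P y y / P x x)"
    by (metis real_sqrt_unique)
qed

end

theorem lemma4p4:
  fixes n :: nat and P :: "bool list \<Rightarrow> bool list \<Rightarrow> real" and \<psi> :: "bool list \<Rightarrow> real"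
  assumes "nonneg_projector n P"
    and "nonneg_state n \<psi>"
    and "\<forall>x\<in>bitstrings n. apply_op n P \<psi> x = \<psi> x"
    and "x \<in> support n \<psi>"
  shows "P x x > 0 \<and>
         (\<forall>y\<in>bitstrings n. P x y > 0 \<longrightarrow>
           y \<in> support n \<psi> \<and> \<psi> y / \<psi> x = sqrt (P y y / P x x))"
proof -
  interpret nonneg_projector_fixed_vector "bitstrings n" P \<psi>
    using assms(1-3) finite_bitstrings
    by unfold_locales (auto simp: nonneg_projector_def nonneg_state_def apply_op_def)
  have "support n \<psi> = supp"
    by (simp add: support_def supp_def)
  then show ?thesis
    using assms(4) diagonal_pos_on_supp amplitude_ratio by auto
qed

end
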